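(* Let $A=(0,0)$, $B=(1,0)$, $C=(1,1)$, $D=(0,1)$ be the vertices of the unit square in the Euclidean plane $\mathbb{R}^2$. There is no point $P$ lying on the boundary of this square (that is, on one of its four edges $AB$, $BC$, $CD$, $DA$) such that the four Euclidean distances $|PA|$, $|PB|$, $|PC|$, $|PD|$ are all rational numbers.
   Context: Distances are ordinary Euclidean distances in $\mathbb{R}^2$. *)

theory Defs
  imports "HOL-Analysis.Analysis"
begin

end

(*
  A point on an edge, say P = (s, 0), has distances R = sqrt (s^2 + 1) and
  S = sqrt ((1 - s)^2 + 1) to the two far vertices. Since R^2 - S^2 = 2 s - 1, the numbers
  u = R + S >= 2 and w = (R - S) (u^2 - 1) satisfy w^2 = (u^2 - 1) (u^2 - 5), so if R and S
  were rational, u = M / e in lowest terms would make M^4 - 6 M^2 e^2 + 5 e^4 a square with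
  M^2 ~= e^2. Fermat descent rules this out: splitting the square into coprime fourth powers
  leads either to a solution of x^4 + 3 x^2 y^2 + y^4 = z^2 and from there to a smaller
  solution of the original equation, or to a solution of 3 x^2 y^2 - x^4 - y^4 = z^2, which
  becomes x^4 - 18 x^2 y^2 + y^4 = z^2 and is excluded by a second descent.
*)

theory Submission
  imports Defs "HOL-Computational_Algebra.Nth_Powers"
begin

lemma coprime_add_mult_left_iff:
  fixes a b c :: int
  shows "coprime (a + c * b) b \<longleftrightarrow> coprime a b"
  by (metis coprime_iff_gcd_eq_1 gcd.commute gcd_add_mult add.commute)

lemma coprime_imp_odd_or_odd:
  fixes a b :: int
  assumes "coprime a b"
  shows "odd a \<or> odd b"
  using assms coprime_common_divisor[of a b 2] by auto

lemma abs_le_abs_mult: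
  fixes a b :: int
  assumes "b \<noteq> 0"
  shows "\<bar>a\<bar> \<le> \<bar>a\<bar> * \<bar>b\<bar>"
  using assms mult_left_mono[of 1 "\<bar>b\<bar>" "\<bar>a\<bar>"] by simp

lemma abs_add_le_abs_mult_add_one:
  fixes a b :: int
  assumes "a \<noteq> 0" and "b \<noteq> 0"
  shows "\<bar>a\<bar> + \<bar>b\<bar> \<le> \<bar>a\<bar> * \<bar>b\<bar> + 1"
proof -
  have "0 \<le> (\<bar>a\<bar> - 1) * (\<bar>b\<bar> - 1)" using assms by simp
  then show ?thesis by (simp add: algebra_simps)
qed

lemma power2_eq_if_abs_eq_mult:
  fixes w a b :: int
  assumes "\<bar>w\<bar> = \<bar>a\<bar> * \<bar>b\<bar>"
  shows "w^2 = a^2 * b^2"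
  using assms by (metis power2_abs power_mult_distrib abs_mult)

lemma odd_square_mod_8:
  fixes x :: int
  assumes "odd x"
  shows "x^2 mod 8 = 1"
proof -
  obtain k where k: "x = 2 * k + 1" using assms by (meson oddE)
  have "even (k * (k + 1))" by simp
  then obtain j where "k * (k + 1) = 2 * j" by blast
  then have "x^2 = 8 * j + 1" unfolding k by (simp add: algebra_simps power2_eq_square)
  then show ?thesis by simp
qed

lemma four_dvd_sum_squares_imp_even:
  fixes x y :: int
  assumes "4 dvd x^2 + y^2"
  shows "even x" and "even y"
proof -
  have square_mod_4: "z^2 mod 4 = (if even z then 0 else 1)" for z :: int
  proof (cases "even z")
    case True
    then obtain k where "z = 2 * k" by blast
    then show ?thesis by (simp add: power2_eq_square)
  next
    case False
    then obtain k where "z = 2 * k + 1" by (meson oddE)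
    then have "z^2 = 4 * (k^2 + k) + 1" by (simp add: algebra_simps power2_eq_square)
    then show ?thesis using False by presburger
  qed
  have "(x^2 mod 4 + y^2 mod 4) mod 4 = 0"
    using assms by (simp add: mod_add_eq dvd_eq_mod_eq_0)
  then show "even x" "even y"
    using square_mod_4[of x] square_mod_4[of y] by (auto split: if_splits)
qed

lemma diff_of_squares_split:
  fixes N P K :: int
  assumes "N^2 = P^2 - 4 * K" and "P > 0" and "K > 0"
  obtains x y where "x + y = P" and "x * y = K" and "x > 0" and "y > 0"
proof -
  have prod: "(P - N) * (P + N) = 4 * K" using assms(1) by (simp add: algebra_simps power2_eq_square)
  have "even (P - N)"
  proof (rule ccontr)
    assume odd: "odd (P - N)"
    then have "odd (P + N)" by (metis even_diff)
    with odd have "odd ((P - N) * (P + N))" by simp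
    with prod show False by simp
  qed
  then obtain x where x: "P - N = 2 * x" by blast
  have "4 * (x * (P - x)) = 4 * K" using prod x by (simp add: algebra_simps)
  then have "x * (P - x) = K" by simp
  moreover from this have "x > 0" "P - x > 0" using assms(2,3) by (auto simp: zero_less_mult_iff)
  ultimately show ?thesis using that[of x "P - x"] by simp
qed

lemma coprime_mult_eq_fourth_powerE:
  fixes x y w :: int
  assumes "coprime x y" and "x > 0" and "y > 0" and "x * y = w^4"
  obtains A B where "x = A^4" and "y = B^4" and "coprime A B" and "\<bar>w\<bar> = \<bar>A\<bar> * \<bar>B\<bar>"
proof -
  have fourth_power: "\<exists>A. a = A^4" if "coprime a b" "a > 0" "b > 0" "a * b = w^4" for a b :: int
  proof -
    have "coprime (nat a) (nat b)"
      using that by (simp add: coprime_int_iff[symmetric])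
    moreover have "nat a * nat b = nat \<bar>w\<bar> ^ 4"
      using that by (simp add: nat_mult_distrib[symmetric] nat_power_eq[symmetric] power_abs)
    ultimately have "is_nth_power 4 (nat a)"
      using is_nth_power_mult_coprime_natD(1)[of "nat a" "nat b" 4] that(2,3) by simp
    then obtain k where "nat a = k^4" by (auto elim: is_nth_powerE)
    then have "int (nat a) = int k ^ 4" by simp
    then show ?thesis using that(2) by auto
  qed
  obtain A where A: "x = A^4" using fourth_power assms by blast
  have "\<exists>B. y = B^4"
    using fourth_power[of y x] assms by (simp add: coprime_commute mult.commute)
  then obtain B where B: "y = B^4" by blast
  have "coprime A B" using assms(1) A B by simp
  moreover have "\<bar>w\<bar>^4 = (\<bar>A\<bar> * \<bar>B\<bar>)^4"
    using assms(4) A B by (simp add: power_mult_distrib power_abs)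
  then have "\<bar>w\<bar> = \<bar>A\<bar> * \<bar>B\<bar>" by (rule power_eq_imp_eq_base) simp_all
  ultimately show ?thesis using that A B by blast
qed

lemma fourth_power_factorsE:
  fixes x y w a b S :: int
  assumes "x * y = w^4" and "x > 0" and "y > 0" and "a * x + b * y = S" and "coprime S w"
  obtains A B where "x = A^4" and "y = B^4" and "coprime A B" and "\<bar>w\<bar> = \<bar>A\<bar> * \<bar>B\<bar>"
proof -
  have "coprime x y"
  proof (rule coprimeI)
    fix d assume "d dvd x" and "d dvd y"
    then have "d dvd a * x + b * y" and "d dvd x * y" by simp_all
    then have "d dvd S" and "d dvd w^4" using assms(1,4) by simp_all
    moreover have "coprime S (w^4)" using assms(5) by simp
    ultimately show "is_unit d" by (meson coprime_common_divisor)
  qed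
  then show ?thesis using coprime_mult_eq_fourth_powerE assms(1-3) that by blast
qed

lemma prime_times_fourth_power_factorsE:
  fixes x y w c a b S :: int
  assumes "prime c" and "x * y = c * w^4" and "x > 0" and "y > 0"
    and "a * x + b * y = S" and "coprime S w"
  obtains A B where "x = c * A^4" and "y = B^4" and "coprime A B" and "\<bar>w\<bar> = \<bar>A\<bar> * \<bar>B\<bar>"
    | A B where "x = A^4" and "y = c * B^4" and "coprime A B" and "\<bar>w\<bar> = \<bar>A\<bar> * \<bar>B\<bar>"
proof -
  have "c > 0" using assms(1) by (simp add: prime_gt_0_int)
  have "c dvd x * y" using assms(2) by simp
  then consider "c dvd x" | "c dvd y" using assms(1) by (auto simp: prime_dvd_mult_iff)
  then show ?thesis
  proof cases
    case 1
    then obtain x' where x': "x = c * x'" by blast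
    have "x' * y = w^4" using assms(2) \<open>c > 0\<close> by (simp add: x' mult.assoc)
    moreover have "x' > 0" using assms(3) \<open>c > 0\<close> by (simp add: x' zero_less_mult_iff)
    moreover have "(a * c) * x' + b * y = S" using assms(5) by (simp add: x' mult.assoc)
    ultimately obtain A B where "x' = A^4" "y = B^4" "coprime A B" "\<bar>w\<bar> = \<bar>A\<bar> * \<bar>B\<bar>"
      using fourth_power_factorsE assms(4,6) by blast
    then show ?thesis using that(1)[of A B] x' by simp
  next
    case 2
    then obtain y' where y': "y = c * y'" by blast
    have "x * y' = w^4" using assms(2) \<open>c > 0\<close> by (simp add: y' ac_simps)
    moreover have "y' > 0" using assms(4) \<open>c > 0\<close> by (simp add: y' zero_less_mult_iff)
    moreover have "a * x + (b * c) * y' = S" using assms(5) by (simp add: y' mult.assoc)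
    ultimately obtain A B where "x = A^4" "y' = B^4" "coprime A B" "\<bar>w\<bar> = \<bar>A\<bar> * \<bar>B\<bar>"
      using fourth_power_factorsE assms(3,6) by blast
    then show ?thesis using that(2)[of A B] y' by simp
  qed
qed

lemma prime_times_fourth_power_sumE:
  fixes x y w c S :: int
  assumes "prime c" and "x * y = c * w^4" and "x > 0" and "y > 0"
    and "x + y = S" and "coprime S w"
  obtains A B where "x + y = c * A^4 + B^4" and "coprime A B" and "\<bar>w\<bar> = \<bar>A\<bar> * \<bar>B\<bar>"
proof -
  have "1 * x + 1 * y = S" using assms(5) by simp
  from assms(1-4) this assms(6) show ?thesis
  proof (cases rule: prime_times_fourth_power_factorsE)
    case (1 A B)
    then show ?thesis using that[of A B] by simp
  next
    case (2 A B)
    then show ?thesis using that[of B A] by (simp add: ac_simps coprime_commute)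
  qed
qed

lemma quartic_1_m18_1_not_square_if_odd:
  fixes p q n :: int
  assumes "odd p" and "odd q"
  shows "n^2 \<noteq> p^4 - 18 * p^2 * q^2 + q^4"
proof
  assume eq: "n^2 = p^4 - 18 * p^2 * q^2 + q^4"
  have "p^2 mod 8 = q^2 mod 8" using assms by (simp add: odd_square_mod_8)
  then obtain t where t: "p^2 - q^2 = 8 * t" by (metis mod_eq_dvd_iff dvd_def)
  have "n^2 = (p^2 - q^2)^2 - 16 * (p * q)^2"
    using eq by (simp add: algebra_simps power2_eq_square power4_eq_xxxx)
  then have n2: "n^2 = 16 * (4 * t^2 - (p * q)^2)"
    unfolding t by (simp add: algebra_simps power2_eq_square)
  then have "even n" by (metis dvd_mult2 even_numeral even_power pos2)
  then obtain k where k: "n = 2 * k" by blast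
  then have k2: "k^2 = 4 * (4 * t^2 - (p * q)^2)" using n2 by (simp add: power2_eq_square)
  then have "even k" by (metis dvd_mult2 even_numeral even_power pos2)
  then obtain j where "k = 2 * j" by blast
  then have "j^2 + (p * q)^2 = 4 * t^2" using k2 by (simp add: power2_eq_square algebra_simps)
  then have "4 dvd j^2 + (p * q)^2" by simp
  then have "even (p * q)" by (rule four_dvd_sum_squares_imp_even)
  then show False using assms by simp
qed

lemma quartic_1_m18_1_square_bound:
  fixes p q n :: int
  assumes "q \<noteq> 0" and "q^2 \<le> p^2" and "n^2 = p^4 - 18 * p^2 * q^2 + q^4"
  shows "9 * q^2 < p^2"
proof (rule ccontr)
  define a b where "a = p^2" and "b = q^2"
  assume "\<not> 9 * q^2 < p^2"
  then have "0 \<le> (9 * b - a) * (a - b)" using assms(2) by (simp add: a_def b_def)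
  moreover have "0 < b" "b \<le> a" using assms(1,2) by (simp_all add: a_def b_def)
  then have "0 < b * b" "0 < a * b" by simp_all
  moreover have "n^2 = a * a - 18 * (a * b) + b * b"
    using assms(3) by (simp add: a_def b_def power2_eq_square power4_eq_xxxx algebra_simps)
  moreover have "0 \<le> n^2" by simp
  ultimately show False by (simp add: algebra_simps)
qed

lemma quartic_1_m18_1_solution_from_1_36_320:
  fixes m w N :: int
  assumes "coprime m w" and "w \<noteq> 0" and "N^2 = m^4 + 36 * m^2 * w^2 + 320 * w^4"
  obtains C D where "coprime C D" and "C \<noteq> 0" and "D \<noteq> 0"
    and "m^2 = C^4 - 18 * C^2 * D^2 + D^4" and "\<bar>w\<bar> = \<bar>C\<bar> * \<bar>D\<bar>"
proof -
  define S where "S = m^2 + 18 * w^2"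
  have "N^2 = S^2 - 4 * w^4"
    using assms(3) by (simp add: S_def algebra_simps power2_eq_square power4_eq_xxxx)
  moreover have "S > 0" using assms(2) by (simp add: S_def add_nonneg_pos)
  moreover have "w^4 > 0" using assms(2) by simp
  ultimately obtain x y where sum: "x + y = S" and prod: "x * y = w^4" and "x > 0" "y > 0"
    by (rule diff_of_squares_split)
  moreover have "coprime S w"
    using assms(1) coprime_add_mult_left_iff[of "m^2" "18 * w" w]
    by (simp add: S_def power2_eq_square mult.assoc)
  ultimately obtain C D where CD: "x = C^4" "y = D^4" "coprime C D" "\<bar>w\<bar> = \<bar>C\<bar> * \<bar>D\<bar>"
    using fourth_power_factorsE[of x y w 1 1 S] by auto
  have "m^2 = C^4 - 18 * C^2 * D^2 + D^4"
    using sum CD(1,2) power2_eq_if_abs_eq_mult[OF CD(4)] by (simp add: S_def)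
  moreover have "C \<noteq> 0" "D \<noteq> 0" using \<open>x > 0\<close> \<open>y > 0\<close> CD(1,2) by auto
  ultimately show ?thesis using that CD(3,4) by blast
qed

lemma quartic_1_m18_1_solution_from_20_9_1:
  fixes A B p :: int
  assumes "coprime A B" and "odd B" and "A \<noteq> 0" and "p^2 = 20 * A^4 + 9 * A^2 * B^2 + B^4"
  obtains C D n where "coprime C D" and "C \<noteq> 0" and "D \<noteq> 0"
    and "n^2 = C^4 - 18 * C^2 * D^2 + D^4" and "\<bar>C\<bar> * \<bar>D\<bar> \<le> \<bar>A\<bar>"
proof (cases "odd A")
  case True
  then have "coprime (2 * B) A" using assms(1) by (simp add: coprime_commute)
  moreover have "(4 * p)^2 = (2 * B)^4 + 36 * (2 * B)^2 * A^2 + 320 * A^4"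
    using assms(4) by (simp add: algebra_simps power2_eq_square power4_eq_xxxx)
  ultimately obtain C D where "coprime C D" "C \<noteq> 0" "D \<noteq> 0"
      "(2 * B)^2 = C^4 - 18 * C^2 * D^2 + D^4" "\<bar>A\<bar> = \<bar>C\<bar> * \<bar>D\<bar>"
    using quartic_1_m18_1_solution_from_1_36_320 assms(3) by blast
  then show ?thesis using that[of C D "2 * B"] by simp
next
  case False
  then obtain A' where A': "A = 2 * A'" by blast
  have "coprime B A'" using assms(1) by (simp add: A' coprime_commute)
  moreover have "A' \<noteq> 0" using assms(3) by (simp add: A')
  moreover have "p^2 = B^4 + 36 * B^2 * A'^2 + 320 * A'^4"
    using assms(4) by (simp add: A' algebra_simps power2_eq_square power4_eq_xxxx)
  ultimately obtain C D where "coprime C D" "C \<noteq> 0" "D \<noteq> 0"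
      "B^2 = C^4 - 18 * C^2 * D^2 + D^4" "\<bar>A'\<bar> = \<bar>C\<bar> * \<bar>D\<bar>"
    using quartic_1_m18_1_solution_from_1_36_320 by blast
  then show ?thesis using that[of C D B] by (simp add: A' abs_mult)
qed

lemma quartic_1_m18_1_solution_from_4_9_5:
  fixes A B p :: int
  assumes "coprime A B" and "odd B" and "p^2 = 4 * A^4 + 9 * A^2 * B^2 + 5 * B^4"
  obtains C D n where "coprime C D" and "C \<noteq> 0" and "D \<noteq> 0"
    and "n^2 = C^4 - 18 * C^2 * D^2 + D^4" and "\<bar>C\<bar> * \<bar>D\<bar> \<le> \<bar>B\<bar>"
proof -
  have "coprime (4 * A) B" using assms(1,2) coprime_power_left_iff[of 2 2 B] by simp
  moreover have "B \<noteq> 0" using assms(2) by auto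
  moreover have "(8 * p)^2 = (4 * A)^4 + 36 * (4 * A)^2 * B^2 + 320 * B^4"
    using assms(3) by (simp add: algebra_simps power2_eq_square power4_eq_xxxx)
  ultimately obtain C D where "coprime C D" "C \<noteq> 0" "D \<noteq> 0"
      "(4 * A)^2 = C^4 - 18 * C^2 * D^2 + D^4" "\<bar>B\<bar> = \<bar>C\<bar> * \<bar>D\<bar>"
    using quartic_1_m18_1_solution_from_1_36_320 by blast
  then show ?thesis using that[of C D "4 * A"] by simp
qed

lemma quartic_1_m18_1_square_factor:
  fixes p q n :: int
  assumes "coprime p q" and "q \<noteq> 0" and "q^2 \<le> p^2" and "n^2 = p^4 - 18 * p^2 * q^2 + q^4"
  obtains x y where "4 * x + y = p^2 - 9 * q^2" and "x * y = 5 * q^4"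
    and "x > 0" and "y > 0" and "odd y"
proof -
  define P where "P = p^2 - 9 * q^2"
  have "P > 0" using quartic_1_m18_1_square_bound assms(2-4) by (simp add: P_def)
  have "odd p \<or> odd q" using assms(1) by (rule coprime_imp_odd_or_odd)
  moreover have "\<not> (odd p \<and> odd q)" using quartic_1_m18_1_not_square_if_odd assms(4) by blast
  ultimately have "odd P" by (auto simp: P_def)
  have "n^2 = P^2 - 4 * (20 * q^4)"
    using assms(4) by (simp add: P_def algebra_simps power2_eq_square power4_eq_xxxx)
  moreover have "20 * q^4 > 0" using assms(2) by simp
  ultimately obtain x0 y0 where xy0: "x0 + y0 = P" "x0 * y0 = 20 * q^4" "x0 > 0" "y0 > 0"
    using \<open>P > 0\<close> by (metis diff_of_squares_split)
  obtain x y where sum: "x + y = P" and prod: "x * y = 20 * q^4" and "x > 0" "y > 0" "even x"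
  proof (cases "even x0")
    case True
    then show ?thesis using that[of x0 y0] xy0 by simp
  next
    case False
    then have "even y0" using \<open>odd P\<close> xy0(1) by auto
    then show ?thesis using that[of y0 x0] xy0 by (simp add: ac_simps)
  qed
  then have "odd y" using \<open>odd P\<close> by auto
  then have "coprime 4 y" using coprime_power_left_iff[of 2 2 y] by simp
  moreover have "4 dvd x * y" using prod by simp
  ultimately have "4 dvd x" by (simp add: coprime_dvd_mult_left_iff)
  then obtain x' where "x = 4 * x'" by blast
  then show ?thesis using that[of x' y] sum prod \<open>x > 0\<close> \<open>y > 0\<close> \<open>odd y\<close> by (simp add: P_def)
qed

lemma quartic_1_m18_1_square_cases:
  fixes p q n :: int
  assumes "coprime p q" and "q \<noteq> 0" and "q^2 \<le> p^2" and "n^2 = p^4 - 18 * p^2 * q^2 + q^4"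
  obtains A B where "coprime A B" and "odd B" and "A \<noteq> 0" and "\<bar>q\<bar> = \<bar>A\<bar> * \<bar>B\<bar>"
      and "p^2 = 20 * A^4 + 9 * A^2 * B^2 + B^4"
    | A B where "coprime A B" and "odd B" and "A \<noteq> 0" and "\<bar>q\<bar> = \<bar>A\<bar> * \<bar>B\<bar>"
      and "p^2 = 4 * A^4 + 9 * A^2 * B^2 + 5 * B^4"
proof -
  obtain x y where sum: "4 * x + y = p^2 - 9 * q^2" and prod: "x * y = 5 * q^4"
    and "x > 0" "y > 0" "odd y"
    using quartic_1_m18_1_square_factor assms by blast
  moreover have "4 * x + 1 * y = p^2 - 9 * q^2" using sum by simp
  moreover have "coprime (p^2 - 9 * q^2) q"
    using assms(1) coprime_add_mult_left_iff[of "p^2" "-9 * q" q]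
    by (simp add: power2_eq_square mult.assoc)
  moreover have "prime (5::int)" by simp
  ultimately consider A B where "x = 5 * A^4" "y = B^4" "coprime A B" "\<bar>q\<bar> = \<bar>A\<bar> * \<bar>B\<bar>"
    | A B where "x = A^4" "y = 5 * B^4" "coprime A B" "\<bar>q\<bar> = \<bar>A\<bar> * \<bar>B\<bar>"
    using prime_times_fourth_power_factorsE[of 5 x y q 4 1 "p^2 - 9 * q^2"] by blast
  then show ?thesis
  proof cases
    case (1 A B)
    then show ?thesis
      using that(1) sum \<open>x > 0\<close> \<open>odd y\<close> power2_eq_if_abs_eq_mult[OF 1(4)] by auto
  next
    case (2 A B)
    then show ?thesis
      using that(2) sum \<open>x > 0\<close> \<open>odd y\<close> power2_eq_if_abs_eq_mult[OF 2(4)] by auto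
  qed
qed

lemma quartic_1_m18_1_descent:
  fixes p q n :: int
  assumes "coprime p q" and "q \<noteq> 0" and "q^2 \<le> p^2" and "n^2 = p^4 - 18 * p^2 * q^2 + q^4"
  obtains C D n' where "coprime C D" and "C \<noteq> 0" and "D \<noteq> 0"
    and "n'^2 = C^4 - 18 * C^2 * D^2 + D^4" and "\<bar>C\<bar> * \<bar>D\<bar> < \<bar>p\<bar> * \<bar>q\<bar>"
proof -
  have "9 * q^2 < p^2" using quartic_1_m18_1_square_bound assms(2-4) by blast
  moreover have "0 < q^2" using assms(2) by simp
  ultimately have "1 < \<bar>p\<bar>" using abs_square_le_1[of p] by linarith
  then have q_less: "\<bar>q\<bar> < \<bar>p\<bar> * \<bar>q\<bar>" using assms(2) by simp
  from assms show ?thesis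
  proof (cases rule: quartic_1_m18_1_square_cases)
    case (1 A B)
    then obtain C D n' where "coprime C D" "C \<noteq> 0" "D \<noteq> 0"
        "n'^2 = C^4 - 18 * C^2 * D^2 + D^4" "\<bar>C\<bar> * \<bar>D\<bar> \<le> \<bar>A\<bar>"
      using quartic_1_m18_1_solution_from_20_9_1 by metis
    moreover have "\<bar>A\<bar> \<le> \<bar>q\<bar>" using 1 abs_le_abs_mult[of B A] by auto
    ultimately show ?thesis using that q_less by fastforce
  next
    case (2 A B)
    then obtain C D n' where "coprime C D" "C \<noteq> 0" "D \<noteq> 0"
        "n'^2 = C^4 - 18 * C^2 * D^2 + D^4" "\<bar>C\<bar> * \<bar>D\<bar> \<le> \<bar>B\<bar>"
      using quartic_1_m18_1_solution_from_4_9_5 by metis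
    moreover have "\<bar>B\<bar> \<le> \<bar>q\<bar>" using 2 abs_le_abs_mult[of A B] by (simp add: mult.commute)
    ultimately show ?thesis using that q_less by fastforce
  qed
qed

lemma quartic_1_m18_1_not_square:
  fixes p q n :: int
  assumes "coprime p q" and "p \<noteq> 0" and "q \<noteq> 0"
  shows "n^2 \<noteq> p^4 - 18 * p^2 * q^2 + q^4"
  using assms
proof (induction "nat (\<bar>p\<bar> * \<bar>q\<bar>)" arbitrary: p q n rule: less_induct)
  case less
  show ?case
  proof
    assume eq: "n^2 = p^4 - 18 * p^2 * q^2 + q^4"
    obtain C D n' where "coprime C D" "C \<noteq> 0" "D \<noteq> 0"
        "n'^2 = C^4 - 18 * C^2 * D^2 + D^4" "\<bar>C\<bar> * \<bar>D\<bar> < \<bar>p\<bar> * \<bar>q\<bar>"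
    proof (cases "q^2 \<le> p^2")
      case True
      then show ?thesis using quartic_1_m18_1_descent less.prems(1,3) eq that by blast
    next
      case False
      have "coprime q p" using less.prems(1) by (simp add: coprime_commute)
      moreover have "n^2 = q^4 - 18 * q^2 * p^2 + p^4" using eq by simp
      ultimately show ?thesis
        using quartic_1_m18_1_descent[of q p n] less.prems(2) False that by (auto simp: mult.commute)
    qed
    then show False using less.hyps[of C D n'] less.prems(2,3) by simp
  qed
qed

lemma quartic_m1_3_m1_not_square:
  fixes m f n :: int
  assumes "coprime m f" and "m^2 \<noteq> f^2"
  shows "n^2 \<noteq> 3 * m^2 * f^2 - m^4 - f^4"
proof
  assume eq: "n^2 = 3 * m^2 * f^2 - m^4 - f^4"
  have odd_if: "odd b" if "coprime a b" and "n^2 + (a^2)^2 = b^2 * (3 * a^2 - b^2)" for a b :: int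
  proof
    assume "even b"
    then obtain k where "b = 2 * k" by blast
    then have "4 dvd n^2 + (a^2)^2" unfolding that(2) by (simp add: power2_eq_square)
    then have "even (a^2)" by (rule four_dvd_sum_squares_imp_even(2))
    then show False using coprime_imp_odd_or_odd[OF that(1)] \<open>even b\<close> by simp
  qed
  have "n^2 + (f^2)^2 = m^2 * (3 * f^2 - m^2)" "n^2 + (m^2)^2 = f^2 * (3 * m^2 - f^2)"
    using eq by (simp_all add: algebra_simps power2_eq_square power4_eq_xxxx)
  then have "odd m" "odd f"
    using odd_if[of f m] odd_if[of m f] assms(1) by (simp_all add: coprime_commute)
  then obtain p where p: "m + f = 2 * p" by (metis odd_add evenE)
  define q where "q = m - p"
  have m: "m = p + q" and f: "f = p - q" using p by (simp_all add: q_def)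
  have "coprime p q"
  proof (rule coprimeI)
    fix d assume "d dvd p" "d dvd q"
    then have "d dvd m" "d dvd f" by (simp_all add: m f)
    then show "is_unit d" using assms(1) coprime_common_divisor by blast
  qed
  moreover have "p \<noteq> 0" "q \<noteq> 0" using assms(2) by (auto simp: m f)
  moreover have "n^2 = p^4 - 18 * p^2 * q^2 + q^4"
    using eq by (simp add: m f algebra_simps power2_eq_square power4_eq_xxxx)
  ultimately show False using quartic_1_m18_1_not_square by blast
qed

lemma quartic_1_3_1_descent_odd:
  fixes m f n :: int
  assumes "coprime m f" and "m \<noteq> 0" and "odd f" and "n^2 = m^4 + 3 * m^2 * f^2 + f^4"
  obtains M e N where "coprime M e" and "e \<noteq> 0" and "M^2 \<noteq> e^2"
    and "N^2 = M^4 - 6 * M^2 * e^2 + 5 * e^4" and "\<bar>M\<bar> + \<bar>e\<bar> \<le> \<bar>m\<bar> * \<bar>f\<bar> + 1"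
proof -
  define Q where "Q = 2 * m^2 + 3 * f^2"
  have "f \<noteq> 0" using assms(3) by auto
  have "(4 * n)^2 = (2 * Q)^2 - 4 * (5 * f^4)"
    using assms(4) by (simp add: Q_def algebra_simps power2_eq_square power4_eq_xxxx)
  moreover have "2 * Q > 0" using \<open>f \<noteq> 0\<close> by (simp add: Q_def add_nonneg_pos)
  moreover have "5 * f^4 > 0" using \<open>f \<noteq> 0\<close> by simp
  ultimately obtain x y where sum: "x + y = 2 * Q" and prod: "x * y = 5 * f^4" and "x > 0" "y > 0"
    by (rule diff_of_squares_split)
  moreover have "coprime Q f"
    using assms(1,3) coprime_add_mult_left_iff[of "2 * m^2" "3 * f" f]
    by (simp add: Q_def power2_eq_square mult.assoc)
  then have "coprime (2 * Q) f" using assms(3) by simp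
  moreover have "prime (5::int)" by simp
  ultimately obtain A B where AB: "x + y = 5 * A^4 + B^4" "coprime A B" "\<bar>f\<bar> = \<bar>A\<bar> * \<bar>B\<bar>"
    using prime_times_fourth_power_sumE[of 5 x y f "2 * Q"] by blast
  have eq: "(2 * m)^2 = B^4 - 6 * B^2 * A^2 + 5 * A^4"
    using sum AB(1) power2_eq_if_abs_eq_mult[OF AB(3)] by (simp add: Q_def algebra_simps)
  have "A \<noteq> 0" "B \<noteq> 0" using AB(3) \<open>f \<noteq> 0\<close> by auto
  have "B^2 \<noteq> A^2"
  proof
    assume "B^2 = A^2"
    then have "(2 * m)^2 = 0" using eq by (simp add: power4_eq_xxxx power2_eq_square)
    then show False using assms(2) by simp
  qed
  have "\<bar>B\<bar> + \<bar>A\<bar> \<le> \<bar>A\<bar> * \<bar>B\<bar> + 1"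
    using abs_add_le_abs_mult_add_one[OF \<open>A \<noteq> 0\<close> \<open>B \<noteq> 0\<close>] by simp
  also have "\<dots> \<le> \<bar>m\<bar> * \<bar>f\<bar> + 1"
    using AB(3) abs_le_abs_mult[OF assms(2), of f] by (simp add: mult.commute)
  finally show ?thesis using that[of B A "2 * m"] AB(2) eq \<open>A \<noteq> 0\<close> \<open>B^2 \<noteq> A^2\<close> by (simp add: coprime_commute)
qed

lemma quartic_1_3_1_descent:
  fixes m f n :: int
  assumes "coprime m f" and "m \<noteq> 0" and "f \<noteq> 0" and "n^2 = m^4 + 3 * m^2 * f^2 + f^4"
  obtains M e N where "coprime M e" and "e \<noteq> 0" and "M^2 \<noteq> e^2"
    and "N^2 = M^4 - 6 * M^2 * e^2 + 5 * e^4" and "\<bar>M\<bar> + \<bar>e\<bar> \<le> \<bar>m\<bar> * \<bar>f\<bar> + 1"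
proof (cases "odd f")
  case True
  then show ?thesis using quartic_1_3_1_descent_odd assms(1,2,4) that by blast
next
  case False
  then have "odd m" using coprime_imp_odd_or_odd[OF assms(1)] by simp
  moreover have "coprime f m" using assms(1) by (simp add: coprime_commute)
  moreover have "n^2 = f^4 + 3 * f^2 * m^2 + m^4" using assms(4) by simp
  ultimately obtain M e N where "coprime M e" "e \<noteq> 0" "M^2 \<noteq> e^2"
      "N^2 = M^4 - 6 * M^2 * e^2 + 5 * e^4" "\<bar>M\<bar> + \<bar>e\<bar> \<le> \<bar>f\<bar> * \<bar>m\<bar> + 1"
    using quartic_1_3_1_descent_odd[of f m n] assms(3) by blast
  then show ?thesis using that[of M e N] by (simp add: mult.commute)
qed

lemma quartic_1_m6_5_square_cases:
  fixes M e N :: int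
  assumes "coprime M e" and "e \<noteq> 0" and "M^2 \<noteq> e^2" and "N^2 = M^4 - 6 * M^2 * e^2 + 5 * e^4"
  obtains m f where "coprime m f" and "m \<noteq> 0" and "f \<noteq> 0" and "\<bar>e\<bar> = \<bar>m\<bar> * \<bar>f\<bar>"
      and "M^2 = m^4 + 3 * m^2 * f^2 + f^4"
    | m f where "coprime m f" and "m^2 \<noteq> f^2" and "M^2 = 3 * m^2 * f^2 - m^4 - f^4"
proof -
  define P where "P = M^2 - 3 * e^2"
  have N2: "N^2 = \<bar>P\<bar>^2 - 4 * e^4"
    using assms(4) by (simp add: P_def algebra_simps power2_eq_square power4_eq_xxxx)
  have "e^4 > 0" using assms(2) by simp
  moreover have "\<bar>P\<bar> > 0"
    using N2 \<open>e^4 > 0\<close> by (smt (verit) power_zero_numeral zero_le_power2)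
  ultimately obtain x y where sum: "x + y = \<bar>P\<bar>" and prod: "x * y = e^4" and "x > 0" "y > 0"
    using N2 by (metis diff_of_squares_split)
  moreover have "1 * x + 1 * y = \<bar>P\<bar>" using sum by simp
  moreover have "coprime \<bar>P\<bar> e"
    using assms(1) coprime_add_mult_left_iff[of "M^2" "-3 * e" e]
    by (simp add: P_def power2_eq_square mult.assoc)
  ultimately obtain m f where mf: "x = m^4" "y = f^4" "coprime m f" "\<bar>e\<bar> = \<bar>m\<bar> * \<bar>f\<bar>"
    using fourth_power_factorsE[of x y e 1 1 "\<bar>P\<bar>"] by blast
  have e2: "e^2 = m^2 * f^2" using mf(4) by (rule power2_eq_if_abs_eq_mult)
  show ?thesis
  proof (cases "P > 0")
    case True
    then have "M^2 = m^4 + 3 * m^2 * f^2 + f^4" using sum mf(1,2) e2 by (simp add: P_def)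
    moreover have "m \<noteq> 0" "f \<noteq> 0" using \<open>x > 0\<close> \<open>y > 0\<close> mf(1,2) by auto
    ultimately show ?thesis using that(1) mf(3,4) by blast
  next
    case False
    then have M2: "M^2 = 3 * m^2 * f^2 - m^4 - f^4" using sum mf(1,2) e2 by (simp add: P_def)
    have "m^2 \<noteq> f^2"
    proof
      assume "m^2 = f^2"
      then have "M^2 = e^2" using M2 e2 by (simp add: power4_eq_xxxx power2_eq_square)
      then show False using assms(3) by simp
    qed
    then show ?thesis using that(2) mf(3) M2 by blast
  qed
qed

lemma quartic_1_m6_5_not_square:
  fixes M e N :: int
  assumes "coprime M e" and "e \<noteq> 0" and "M^2 \<noteq> e^2"
  shows "N^2 \<noteq> M^4 - 6 * M^2 * e^2 + 5 * e^4"
  using assms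
proof (induction "nat (\<bar>M\<bar> + \<bar>e\<bar>)" arbitrary: M e N rule: less_induct)
  case less
  show ?case
  proof
    assume "N^2 = M^4 - 6 * M^2 * e^2 + 5 * e^4"
    with less.prems show False
    proof (cases rule: quartic_1_m6_5_square_cases)
      case (1 m f)
      obtain M' e' N' where smaller: "coprime M' e'" "e' \<noteq> 0" "M'^2 \<noteq> e'^2"
          "N'^2 = M'^4 - 6 * M'^2 * e'^2 + 5 * e'^4" and le: "\<bar>M'\<bar> + \<bar>e'\<bar> \<le> \<bar>m\<bar> * \<bar>f\<bar> + 1"
        using quartic_1_3_1_descent 1 by metis
      have "0 < m^4" "0 < f^4" using 1 by simp_all
      then have "1 < M^2" using 1(5) by (smt (verit) zero_le_mult_iff zero_le_power2)
      then have "1 < \<bar>M\<bar>" using abs_square_le_1[of M] by linarith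
      then have "nat (\<bar>M'\<bar> + \<bar>e'\<bar>) < nat (\<bar>M\<bar> + \<bar>e\<bar>)" using le 1(4) by linarith
      then show False using less.hyps smaller by blast
    next
      case (2 m f)
      then show False using quartic_m1_3_m1_not_square by blast
    qed
  qed
qed

lemma rat_square_eq_int_imp_square:
  fixes r :: real and K :: int
  assumes "r \<in> \<rat>" and "r^2 = of_int K"
  obtains N :: int where "N^2 = K"
proof -
  obtain a b :: int where "b > 0" and r: "r = of_int a / of_int b"
    using Rats_cases'[OF assms(1)] by metis
  then have "of_int a = r * of_int b" by simp
  then have "(of_int a)^2 = (of_int K * (of_int b)^2 :: real)"
    using assms(2) by (simp add: power_mult_distrib)
  then have ab: "a^2 = K * b^2" by (metis of_int_eq_iff of_int_mult of_int_power)
  then have "b^2 dvd a^2" by simp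
  then have "b dvd a" by (simp add: pow_divides_pow_iff)
  then obtain N where "a = b * N" by blast
  then have "N^2 = K" using ab \<open>b > 0\<close> by (simp add: power_mult_distrib)
  then show ?thesis by (rule that)
qed

lemma quartic_curve_rational_points:
  fixes u w :: real
  assumes "u \<in> \<rat>" and "w \<in> \<rat>" and "w^2 = (u^2 - 1) * (u^2 - 5)"
  shows "u^2 = 1"
proof (rule ccontr)
  assume "u^2 \<noteq> 1"
  obtain M e :: int where "e > 0" and "coprime M e" and u: "u = of_int M / of_int e"
    using Rats_cases'[OF assms(1)] by metis
  have "(w * of_int e ^ 2)^2 = of_int (M^4 - 6 * M^2 * e^2 + 5 * e^4)"
    using assms(3) \<open>e > 0\<close> by (simp add: u field_simps power2_eq_square power4_eq_xxxx)
  moreover have "w * of_int e ^ 2 \<in> \<rat>" using assms(2) by simp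
  ultimately obtain N where "N^2 = M^4 - 6 * M^2 * e^2 + 5 * e^4"
    using rat_square_eq_int_imp_square by metis
  moreover have "M^2 \<noteq> e^2"
    using \<open>u^2 \<noteq> 1\<close> \<open>e > 0\<close> by (auto simp: u power_divide simp flip: of_int_power)
  ultimately show False using quartic_1_m6_5_not_square \<open>coprime M e\<close> \<open>e > 0\<close> by blast
qed

lemma sqrt_hypotenuses_not_both_rational:
  fixes s :: real
  assumes "sqrt (s^2 + 1) \<in> \<rat>" and "sqrt ((1 - s)^2 + 1) \<in> \<rat>"
  shows False
proof -
  define R S where "R = sqrt (s^2 + 1)" and "S = sqrt ((1 - s)^2 + 1)"
  have R2: "R^2 = s^2 + 1" and S2: "S^2 = (1 - s)^2 + 1" by (simp_all add: R_def S_def)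
  have "R \<ge> 1" "S \<ge> 1" by (simp_all add: R_def S_def)
  define u where "u = R + S"
  have d: "(R - S) * u = 2 * s - 1"
    using R2 S2 by (simp add: u_def algebra_simps power2_eq_square)
  have "(R - S)^2 * u^2 - (R - S)^2 = u^2 - 5"
  proof -
    have "(R - S)^2 * u^2 = (2 * s - 1)^2" using d by (metis power_mult_distrib)
    moreover have "(R - S)^2 + u^2 = 2 * R^2 + 2 * S^2"
      by (simp add: u_def algebra_simps power2_eq_square)
    moreover have "(2 * s - 1)^2 = 4 * s^2 - 4 * s + 1" "(1 - s)^2 = 1 - 2 * s + s^2"
      by (simp_all add: algebra_simps power2_eq_square)
    ultimately show ?thesis using R2 S2 by linarith
  qed
  then have key: "(R - S)^2 * (u^2 - 1) = u^2 - 5" by (simp add: right_diff_distrib)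
  have "((R - S) * (u^2 - 1))^2 = ((R - S)^2 * (u^2 - 1)) * (u^2 - 1)"
    by (simp add: power2_eq_square algebra_simps)
  then have "((R - S) * (u^2 - 1))^2 = (u^2 - 1) * (u^2 - 5)" by (simp add: key)
  moreover have "u \<in> \<rat>" "(R - S) * (u^2 - 1) \<in> \<rat>"
    using assms by (simp_all add: u_def R_def S_def)
  ultimately have "u^2 = 1" using quartic_curve_rational_points by blast
  moreover have "2^2 \<le> u^2" using \<open>R \<ge> 1\<close> \<open>S \<ge> 1\<close> by (intro power_mono) (simp_all add: u_def)
  ultimately show False by simp
qed

lemma unit_square_boundary_distances:
  fixes P :: "real \<times> real"
  assumes "P \<in> closed_segment (0, 0) (1, 0) \<union> closed_segment (1, 0) (1, 1)
    \<union> closed_segment (1, 1) (0, 1) \<union> closed_segment (0, 1) (0, 0)"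
  obtains s where "sqrt (s^2 + 1) \<in> {dist P (0, 0), dist P (1, 0), dist P (1, 1), dist P (0, 1)}"
    and "sqrt ((1 - s)^2 + 1) \<in> {dist P (0, 0), dist P (1, 0), dist P (1, 1), dist P (0, 1)}"
proof -
  have dist_eq: "dist (x, y) (a, b) = sqrt ((x - a)^2 + (y - b)^2)" for x y a b :: real
    by (simp add: dist_Pair_Pair dist_real_def)
  have on_segment: "\<exists>u. P = (1 - u) *\<^sub>R a + u *\<^sub>R b" if "P \<in> closed_segment a b" for a b
    using that by (auto simp: in_segment)
  from assms consider "P \<in> closed_segment (0, 0) (1, 0)" | "P \<in> closed_segment (1, 0) (1, 1)"
    | "P \<in> closed_segment (1, 1) (0, 1)" | "P \<in> closed_segment (0, 1) (0, 0)" by blast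
  then have "\<exists>u. P = (u, 0) \<or> P = (1, u) \<or> P = (1 - u, 1) \<or> P = (0, 1 - u)"
    by cases (auto dest!: on_segment)
  then obtain u where "P = (u, 0) \<or> P = (1, u) \<or> P = (1 - u, 1) \<or> P = (0, 1 - u)" by blast
  then show ?thesis
    using that[of u] by (elim disjE) (simp_all add: dist_eq power2_commute add.commute)
qed

theorem theorem1:
  fixes P :: "real \<times> real"
  defines "A \<equiv> (0::real, 0::real)" and "B \<equiv> (1::real, 0::real)"
      and "C \<equiv> (1::real, 1::real)" and "D \<equiv> (0::real, 1::real)"
  assumes "P \<in> closed_segment A B \<union> closed_segment B C \<union> closed_segment C D \<union> closed_segment D A"
  shows "\<not> (dist P A \<in> \<rat> \<and> dist P B \<in> \<rat> \<and> dist P C \<in> \<rat> \<and> dist P D \<in> \<rat>)"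
proof
  assume "dist P A \<in> \<rat> \<and> dist P B \<in> \<rat> \<and> dist P C \<in> \<rat> \<and> dist P D \<in> \<rat>"
  then have rational: "{dist P A, dist P B, dist P C, dist P D} \<subseteq> \<rat>" by simp
  obtain s where "sqrt (s^2 + 1) \<in> {dist P A, dist P B, dist P C, dist P D}"
    and "sqrt ((1 - s)^2 + 1) \<in> {dist P A, dist P B, dist P C, dist P D}"
    using unit_square_boundary_distances assms unfolding A_def B_def C_def D_def by blast
  with rational show False using sqrt_hypotenuses_not_both_rational by blast
qed

end
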